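(* Let $n\ge1$ and let $\mu$ be the Möbius function of the finite poset $(\hat N^n,\le)$, where $\le$ is the componentwise order, and set $M(\vec v)=\mu((1,1,\dots,1),\vec v)$ (note $(1,\dots,1)$ is the minimum). Then for $\vec v=(v_1,\dots,v_n)\in\hat N^n$: if $v_i\in\{1,i\}$ for every $i$, then $M(\vec v)=(-1)^{t_{\vec v}}$ where $t_{\vec v}=\#\{i\ge2:\ v_i=i\}$; otherwise $M(\vec v)=0$.
   Context: $Y_n$ is the set of planar rooted binary trees with $n$ internal vertices ($n+1$ leaves) up to isotopy, with grafting $\tau_1\vee\tau_2$ (new root, left subtree $\tau_1$, right subtree $\tau_2$). A complete expression in $x_1,\dots,x_{n+1}$ is a full binary parenthesization of $x_1\cdots x_{n+1}$ (every product of two factors, including the outermost, in parentheses); trees correspond bijectively to complete expressions via $|\mapsto x_1$, $\tau_1\vee\tau_2\mapsto(E_1E_2)$ with consecutive relabelling. Name of $\tau\in Y_n$: the vector $\vec v\in\mathbb N^n$ with $v_i=i$ if at least one left parenthesis stands immediately left of $x_i$ in the complete expression of $\tau$; otherwise the rightmost of the right parentheses immediately following $x_i$ matches a left parenthesis in the run immediately preceding some $x_j$, and $v_i=j$. $\hat N^n$ is the set of names of trees of $Y_n$. The componentwise order is $\vec v\le\vec w$ iff $v_i\le w_i$ for all $i$ (this order on names corresponds to the Tamari order on trees). *)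

theory Defs
  imports Main
begin

datatype tree = Leaf | Node tree tree  (* Node t1 t2 = t1 \<or> t2 (grafting) *)

fun internal :: "tree \<Rightarrow> nat" where
  "internal Leaf = 0"
| "internal (Node l r) = Suc (internal l + internal r)"

fun leaves :: "tree \<Rightarrow> nat" where
  "leaves Leaf = 1"
| "leaves (Node l r) = leaves l + leaves r"

datatype tok = LP | RP | X nat

fun label :: "tok \<Rightarrow> nat" where
  "label (X i) = i"
| "label _ = 0"

fun expr_from :: "tree \<Rightarrow> nat \<Rightarrow> tok list" where
  "expr_from Leaf k = [X k]"
| "expr_from (Node l r) k = [LP] @ expr_from l k @ expr_from r (k + leaves l) @ [RP]"

definition expr :: "tree \<Rightarrow> tok list" where
  "expr t = expr_from t 1"

definition depth :: "tok list \<Rightarrow> nat \<Rightarrow> int" where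
  "depth e k = int (length (filter (\<lambda>c. c = LP) (take k e)))
             - int (length (filter (\<lambda>c. c = RP) (take k e)))"

definition pos :: "tok list \<Rightarrow> nat \<Rightarrow> nat" where
  "pos e i = (THE p. p < length e \<and> e ! p = X i)"

text \<open>The left parenthesis matching the right parenthesis at position q.\<close>
definition match :: "tok list \<Rightarrow> nat \<Rightarrow> nat" where
  "match e q = (THE m. m < q \<and> e ! m = LP \<and> depth e (Suc m) = depth e q \<and>
                     (\<forall>k. Suc m \<le> k \<and> k \<le> q \<longrightarrow> depth e (Suc m) \<le> depth e k))"

definition name_comp :: "tok list \<Rightarrow> nat \<Rightarrow> nat" where
  "name_comp e i =
     (let p = pos e i in
      if 0 < p \<and> e ! (p - 1) = LP then i
      else
        (let q = p + length (takeWhile (\<lambda>c. c = RP) (drop (Suc p) e));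
             \<comment> \<open>q: rightmost right parenthesis of the run immediately following x_i\<close>
             m = match e q;
             \<comment> \<open>the run of left parentheses containing m immediately precedes x_j\<close>
             r = m + length (takeWhile (\<lambda>c. c = LP) (drop m e))
         in label (e ! r)))"

text \<open>Name of a tree in Y_n, as a list [v_1, ..., v_n] (v_i = list index i-1).\<close>
definition tree_name :: "tree \<Rightarrow> nat list" where
  "tree_name t = map (name_comp (expr t)) [1..<Suc (internal t)]"

definition names :: "nat \<Rightarrow> nat list set" where
  "names n = tree_name ` {t. internal t = n}"

definition comp_le :: "nat list \<Rightarrow> nat list \<Rightarrow> bool" where
  "comp_le v w = list_all2 (\<le>) v w"

definition mobius :: "'a set \<Rightarrow> ('a \<Rightarrow> 'a \<Rightarrow> bool) \<Rightarrow> 'a \<Rightarrow> 'a \<Rightarrow> int" where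
  "mobius S le x = (THE f. \<forall>y. f y =
      (if y \<in> S \<and> x \<in> S \<and> le x y then
         (if y = x then 1 else - (\<Sum>z\<in>{z\<in>S. le x z \<and> le z y \<and> z \<noteq> y}. f z))
       else 0))"

end

theory Submission
  imports Defs
begin

(* The name of a tree can be computed recursively: v_i is the first variable of the largest
   subtree whose last variable is x_i.  Hence 1 <= v_i <= i; a name without a component
   v_i = i (i >= 2) is the minimum (1,...,1), since the tree is then a left comb; and for every
   T in {2..n} the vector with v_i = i on T and v_i = 1 elsewhere is a name, obtained by adding
   leaves one at a time.  For a name y other than the minimum let D be its nonempty set of
   components i >= 2 with y_i = i.  The vectors of the above form that lie below y are exactly
   those with T a subset of D, so the proposed values (-1)^|T| sum to zero over the interval
   [(1,...,1), y].  That is the recursion defining the Moebius function, which determines it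
   uniquely on a finite poset. *)

section \<open>Parentheses in complete expressions\<close>

lemma leaves_eq_Suc_internal: "leaves t = Suc (internal t)"
  by (induction t) auto

fun balance :: "tok list \<Rightarrow> int" where
  "balance [] = 0"
| "balance (LP # w) = balance w + 1"
| "balance (RP # w) = balance w - 1"
| "balance (X _ # w) = balance w"

lemma balance_append [simp]: "balance (u @ w) = balance u + balance w"
  by (induction u rule: balance.induct) auto

lemma depth_eq_balance: "depth e k = balance (take k e)"
proof -
  have "int (length (filter (\<lambda>c. c = LP) w)) - int (length (filter (\<lambda>c. c = RP) w)) = balance w"
    for w by (induction w rule: balance.induct) auto
  then show ?thesis unfolding depth_def .
qed

lemma balance_take_append_nonneg:
  assumes "\<And>m. 0 \<le> balance (take m u)" and "\<And>m. 0 \<le> balance (take m w)"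
  shows "0 \<le> balance (take m (u @ w))"
  using assms(1)[of m] assms(1)[of "length u"] assms(2)[of "m - length u"]
  by (simp add: take_append)

lemma balance_take_bracket_pos:
  assumes "\<And>m. 0 \<le> balance (take m u)" and "0 < m" and "m \<le> Suc (length u)"
  shows "0 < balance (take m (LP # u @ [RP]))"
proof -
  obtain m' where "m = Suc m'" and "m' \<le> length u"
    using assms(2,3) by (cases m) auto
  then show ?thesis using assms(1)[of m'] by simp
qed

lemma balance_expr_from [simp]: "balance (expr_from t k) = 0"
  by (induction t arbitrary: k) auto

lemma balance_take_expr_from_nonneg: "0 \<le> balance (take m (expr_from t k))"
proof (induction t arbitrary: k m)
  case Leaf
  then show ?case by (cases m) auto
next
  case (Node l r)
  let ?u = "expr_from l k @ expr_from r (k + leaves l)"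
  have u: "0 \<le> balance (take m ?u)" for m
    using Node.IH by (rule balance_take_append_nonneg)
  show ?case
  proof (cases "0 < m \<and> m \<le> Suc (length ?u)")
    case True
    then have "0 < balance (take m (LP # ?u @ [RP]))"
      by (intro balance_take_bracket_pos[OF u]) auto
    then show ?thesis by simp
  next
    case False
    then have "m = 0 \<or> length (expr_from (Node l r) k) \<le> m" by auto
    then show ?thesis by auto
  qed
qed

lemma pos_eqI:
  assumes "e = A @ X i # B" and "count_list e (X i) = 1"
  shows "pos e i = length A"
  unfolding pos_def
proof (rule the_equality)
  show "length A < length e \<and> e ! length A = X i" using assms(1) by simp
next
  have notin: "X i \<notin> set A" "X i \<notin> set B"
    using assms by (auto simp: count_list_0_iff[symmetric])
  fix p assume p: "p < length e \<and> e ! p = X i"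
  show "p = length A"
  proof (rule linorder_cases)
    assume "p < length A"
    then show ?thesis using p notin(1) assms(1) by (metis nth_append nth_mem)
  next
    assume "length A < p"
    then have "B ! (p - Suc (length A)) = X i" and "p - Suc (length A) < length B"
      using p assms(1) by (auto simp: nth_append)
    then show ?thesis using notin(2) nth_mem by metis
  qed
qed

lemma match_bracket:
  assumes e: "e = P @ LP # u @ RP # C"
    and bal: "balance u = 0" and nonneg: "\<And>m. 0 \<le> balance (take m u)"
  shows "match e (length P + length u + 1) = length P"
proof -
  let ?q = "length P + length u + 1" and ?w = "LP # u @ [RP]"
  have depth_inside: "depth e k = balance P + balance (take (k - length P) ?w)"
    if "length P \<le> k" "k \<le> ?q" for k
  proof -
    have "take k e = P @ take (k - length P) (?w @ C)" using e that by (simp add: take_append)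
    also have "take (k - length P) (?w @ C) = take (k - length P) ?w"
      using that by (subst take_append) simp
    finally show ?thesis by (simp add: depth_eq_balance)
  qed
  have depth_ge: "balance P + 1 \<le> depth e k" if "Suc (length P) \<le> k" "k \<le> ?q" for k
  proof -
    have "0 < balance (take (k - length P) ?w)"
      using that by (intro balance_take_bracket_pos[OF nonneg]) auto
    then show ?thesis using depth_inside[of k] that by simp
  qed
  have depth_open: "depth e (Suc (length P)) = balance P + 1"
    using depth_inside[of "Suc (length P)"] by simp
  have depth_close: "depth e ?q = balance P + 1"
    using depth_inside[of ?q] bal by simp
  have depth_P: "depth e (length P) = balance P"
    using depth_inside[of "length P"] by simp
  show ?thesis
    unfolding match_def
  proof (rule the_equality)
    show "length P < ?q \<and> e ! length P = LP \<and> depth e (Suc (length P)) = depth e ?q \<and>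
      (\<forall>k. Suc (length P) \<le> k \<and> k \<le> ?q \<longrightarrow> depth e (Suc (length P)) \<le> depth e k)"
      using e depth_open depth_close depth_ge by simp
  next
    fix m assume m: "m < ?q \<and> e ! m = LP \<and> depth e (Suc m) = depth e ?q \<and>
      (\<forall>k. Suc m \<le> k \<and> k \<le> ?q \<longrightarrow> depth e (Suc m) \<le> depth e k)"
    show "m = length P"
    proof (rule linorder_cases)
      assume "m < length P"
      then have "depth e (Suc m) \<le> depth e (length P)" using m by auto
      then show ?thesis using m depth_close depth_P by simp
    next
      assume "length P < m"
      moreover have "m < length e" using m e by simp
      then have "depth e (Suc m) = depth e m + 1"
        using m by (simp add: depth_eq_balance take_Suc_conv_app_nth)
      ultimately show ?thesis using m depth_ge[of m] depth_close by simp
    qed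
  qed
qed

lemma last_expr_from: "last (expr_from t k) = (if t = Leaf then X k else RP)"
  by (cases t) auto

lemma hd_expr_from: "hd (expr_from t k) = (if t = Leaf then X k else LP)"
  by (cases t) auto

lemma expr_from_not_Nil [simp]: "expr_from t k \<noteq> []"
  by (cases t) auto

lemma count_list_expr_from:
  "count_list (expr_from t k) (X i) = (if k \<le> i \<and> i < k + leaves t then 1 else 0)"
  by (induction t arbitrary: k) auto

lemma expr_from_first_var: "\<exists>c w. expr_from t j = replicate c LP @ X j # w"
proof (induction t arbitrary: j)
  case Leaf
  show ?case by (intro exI[of _ 0]) simp
next
  case (Node l r)
  then obtain c w where "expr_from l j = replicate c LP @ X j # w" by blast
  then show ?case by (intro exI[of _ "Suc c"]) simp
qed

lemma expr_from_last_var: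
  assumes "t \<noteq> Leaf"
  shows "\<exists>W a. expr_from t k = W @ X (k + leaves t - 1) # replicate a RP \<and>
           0 < a \<and> W \<noteq> [] \<and> last W \<noteq> LP"
  using assms
proof (induction t arbitrary: k)
  case Leaf
  then show ?case by simp
next
  case (Node l r)
  show ?case
  proof (cases "r = Leaf")
    case True
    then show ?thesis
      by (intro exI[of _ "LP # expr_from l k"] exI[of _ 1]) (simp add: last_expr_from)
  next
    case False
    then obtain W a where "expr_from r (k + leaves l) = W @ X (k + leaves l + leaves r - 1) # replicate a RP"
      and "0 < a" "W \<noteq> []" "last W \<noteq> LP"
      using Node.IH(2) by blast
    then show ?thesis
      by (intro exI[of _ "LP # expr_from l k @ W"] exI[of _ "Suc a"])
        (simp add: add.assoc replicate_append_same[symmetric])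
  qed
qed

section \<open>Names computed recursively\<close>

text \<open>\<open>name_from t k i\<close> is the first label of the largest subtree of \<open>t\<close> (variables
  labelled from \<open>k\<close>) whose last variable is \<open>x\<^sub>i\<close>: the right parentheses after \<open>x\<^sub>i\<close>
  close exactly the subtrees ending at \<open>x\<^sub>i\<close>, the rightmost one closes the largest of
  them, and its left parenthesis lies in the run preceding that subtree's first variable.\<close>
fun name_from :: "tree \<Rightarrow> nat \<Rightarrow> nat \<Rightarrow> nat" where
  "name_from Leaf k i = k"
| "name_from (Node l r) k i =
     (if i = k + leaves l + leaves r - 1 then k
      else if i < k + leaves l then name_from l k i
      else name_from r (k + leaves l) i)"

lemma name_from_last: "name_from t k (k + leaves t - 1) = k"
  by (cases t) auto

lemma name_from_first: "name_from t k k = k"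
  by (induction t arbitrary: k) (auto simp: leaves_eq_Suc_internal)

lemma expr_from_var_cases:
  assumes "k \<le> i" and "i < k + leaves t - 1"
  shows "(\<exists>A B. expr_from t k = A @ LP # X i # B \<and> name_from t k i = i) \<or>
         (\<exists>P s C. expr_from t k = P @ expr_from s (name_from t k i) @ C \<and> s \<noteq> Leaf \<and>
            i = name_from t k i + leaves s - 1 \<and> C \<noteq> [] \<and> hd C \<noteq> RP)"
  using assms
proof (induction t arbitrary: k)
  case Leaf
  then show ?case by simp
next
  case (Node l r)
  let ?el = "expr_from l k" and ?er = "expr_from r (k + leaves l)"
  have leaves_pos: "0 < leaves l" "0 < leaves r"
    by (simp_all add: leaves_eq_Suc_internal)
  consider "i < k + leaves l - 1" | "i = k + leaves l - 1" | "k + leaves l \<le> i"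
    by linarith
  then show ?case
  proof cases
    case 1
    then have "name_from (Node l r) k i = name_from l k i" using leaves_pos by auto
    with Node.IH(1)[OF Node.prems(1) 1] show ?thesis
    proof (elim disjE exE conjE)
      fix A B assume "?el = A @ LP # X i # B" "name_from l k i = i"
      with \<open>name_from (Node l r) k i = _\<close> show ?thesis
        by (intro disjI1 exI[of _ "LP # A"] exI[of _ "B @ ?er @ [RP]"]) simp
    next
      fix P s C assume "?el = P @ expr_from s (name_from l k i) @ C" "s \<noteq> Leaf"
        "i = name_from l k i + leaves s - 1" "C \<noteq> []" "hd C \<noteq> RP"
      with \<open>name_from (Node l r) k i = _\<close> show ?thesis
        by (intro disjI2 exI[of _ "LP # P"] exI[of _ s] exI[of _ "C @ ?er @ [RP]"]) simp
    qed
  next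
    case 2
    then have name: "name_from (Node l r) k i = k"
      using leaves_pos name_from_last[of l k] by auto
    show ?thesis
    proof (cases "l = Leaf")
      case True
      then show ?thesis using 2 name
        by (intro disjI1 exI[of _ "[]"] exI[of _ "?er @ [RP]"]) simp
    next
      case False
      then show ?thesis using 2 name
        by (intro disjI2 exI[of _ "[LP]"] exI[of _ l] exI[of _ "?er @ [RP]"])
          (simp add: hd_expr_from)
    qed
  next
    case 3
    then have "name_from (Node l r) k i = name_from r (k + leaves l) i"
      using Node.prems by auto
    have "i < k + leaves l + leaves r - 1" using Node.prems by simp
    from Node.IH(2)[OF 3 this] show ?thesis
    proof (elim disjE exE conjE)
      fix A B assume "?er = A @ LP # X i # B" "name_from r (k + leaves l) i = i"
      with \<open>name_from (Node l r) k i = _\<close> show ?thesis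
        by (intro disjI1 exI[of _ "LP # ?el @ A"] exI[of _ "B @ [RP]"]) simp
    next
      fix P s C assume "?er = P @ expr_from s (name_from r (k + leaves l) i) @ C" "s \<noteq> Leaf"
        "i = name_from r (k + leaves l) i + leaves s - 1" "C \<noteq> []" "hd C \<noteq> RP"
      with \<open>name_from (Node l r) k i = _\<close> show ?thesis
        by (intro disjI2 exI[of _ "LP # ?el @ P"] exI[of _ s] exI[of _ "C @ [RP]"]) simp
    qed
  qed
qed

lemma takeWhile_eq_replicate_append [simp]:
  "takeWhile (\<lambda>c. c = x) (replicate a x @ ys) = replicate a x @ takeWhile (\<lambda>c. c = x) ys"
  by (induction a) auto

lemma name_comp_after_LP:
  assumes "e = A @ LP # X i # B" and "count_list e (X i) = 1"
  shows "name_comp e i = i"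
proof -
  have "pos e i = Suc (length A)"
    using pos_eqI[of e "A @ [LP]"] assms by simp
  with assms(1) show ?thesis
    unfolding name_comp_def Let_def by (simp add: nth_append)
qed

lemma name_comp_last_var:
  assumes e: "e = P @ expr_from s j @ C" and "s \<noteq> Leaf" and i: "i = j + leaves s - 1"
    and C: "C \<noteq> []" "hd C \<noteq> RP" and count: "count_list e (X i) = 1"
  shows "name_comp e i = j"
proof -
  obtain W a where s_last: "expr_from s j = W @ X i # replicate a RP"
    and "0 < a" "W \<noteq> []" "last W \<noteq> LP"
    using expr_from_last_var[OF \<open>s \<noteq> Leaf\<close>, of j] i by blast
  have e': "e = (P @ W) @ X i # (replicate a RP @ C)" using e s_last by simp
  have p: "pos e i = length P + length W" using pos_eqI[OF e' count] by simp
  obtain W' x where "W = W' @ [x]"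
    using \<open>W \<noteq> []\<close> by (cases W rule: rev_cases) auto
  then have "e ! (pos e i - 1) = last W"
    using e' p by (simp add: nth_append)
  then have not_after_LP: "\<not> (0 < pos e i \<and> e ! (pos e i - 1) = LP)"
    using \<open>last W \<noteq> LP\<close> by simp
  have run: "length (takeWhile (\<lambda>c. c = RP) (drop (Suc (pos e i)) e)) = a"
    using e' p C by (cases C) simp_all
  obtain l r where s: "s = Node l r" using \<open>s \<noteq> Leaf\<close> by (cases s) auto
  let ?u = "expr_from l j @ expr_from r (j + leaves l)"
  have "e = P @ LP # ?u @ RP # C" using e s by simp
  moreover have "balance ?u = 0" by simp
  moreover have "0 \<le> balance (take m ?u)" for m
    by (intro balance_take_append_nonneg balance_take_expr_from_nonneg)
  ultimately have "match e (length P + length ?u + 1) = length P"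
    by (rule match_bracket)
  moreover have "length W + Suc a = length ?u + 2"
    using arg_cong[OF s_last, of length] s by simp
  then have "pos e i + a = length P + length ?u + 1" using p by simp
  ultimately have match: "match e (pos e i + a) = length P" by simp
  obtain c w where s_first: "expr_from s j = replicate c LP @ X j # w"
    using expr_from_first_var by blast
  have "drop (length P) e = replicate c LP @ X j # w @ C" using e s_first by simp
  then have "length (takeWhile (\<lambda>c. c = LP) (drop (length P) e)) = c"
    and "e ! (length P + c) = X j"
    using e s_first by (simp_all add: nth_append)
  then show ?thesis
    unfolding name_comp_def Let_def using not_after_LP run match by auto
qed

lemma name_comp_expr:
  assumes "1 \<le> i" and "i \<le> internal t"
  shows "name_comp (expr t) i = name_from t 1 i"
proof -
  have count: "count_list (expr_from t 1) (X i) = 1"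
    using assms by (simp add: count_list_expr_from leaves_eq_Suc_internal)
  have "i < 1 + leaves t - 1" using assms by (simp add: leaves_eq_Suc_internal)
  from expr_from_var_cases[OF assms(1) this] count show ?thesis
    unfolding expr_def
    by (elim disjE exE conjE) (simp_all add: name_comp_after_LP name_comp_last_var)
qed

lemma tree_name_eq: "tree_name t = map (\<lambda>j. name_from t 1 (Suc j)) [0..<internal t]"
proof -
  have "[1..<Suc (internal t)] = map Suc [0..<internal t]"
    by (simp only: map_Suc_upt One_nat_def)
  then show ?thesis
    unfolding tree_name_def map_map by (simp add: name_comp_expr)
qed

lemma name_from_bounds:
  assumes "k \<le> i" and "i < k + leaves t"
  shows "k \<le> name_from t k i \<and> name_from t k i \<le> i"
  using assms
proof (induction t arbitrary: k)
  case (Node l r)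
  show ?case
  proof (cases "i < k + leaves l")
    case True
    then show ?thesis using Node by auto
  next
    case False
    then have "k + leaves l \<le> name_from r (k + leaves l) i \<and> name_from r (k + leaves l) i \<le> i"
      using Node.IH(2)[of "k + leaves l"] Node.prems by (simp add: add.assoc)
    then show ?thesis using False by auto
  qed
qed simp

text \<open>A right subtree that is not a leaf would make its first variable a fixed point,
  so \<open>t\<close> is a left comb.\<close>
lemma name_from_no_fixed_point:
  assumes "\<forall>i\<in>{2..internal t}. name_from t 1 i \<noteq> i" and "i \<in> {1..internal t}"
  shows "name_from t 1 i = 1"
  using assms
proof (induction t arbitrary: i)
  case Leaf
  then show ?case by simp
next
  case (Node l r)
  show ?case
  proof (cases r)
    case (Node r1 r2)
    let ?j = "1 + leaves l"
    have "?j \<in> {2..internal (Node l r)}" and "name_from (Node l r) 1 ?j = ?j"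
      using Node by (simp_all add: leaves_eq_Suc_internal name_from_first)
    with Node.prems(1) show ?thesis by blast
  next
    case Leaf
    then have internal: "internal (Node l r) = leaves l"
      by (simp add: leaves_eq_Suc_internal)
    have left: "name_from (Node l r) 1 j = name_from l 1 j" if "j < leaves l" for j
      using that Leaf by simp
    show ?thesis
    proof (cases "i < leaves l")
      case True
      have "\<forall>j\<in>{2..internal l}. name_from l 1 j \<noteq> j"
        using Node.prems(1) left internal by (auto simp: leaves_eq_Suc_internal)
      then show ?thesis
        using Node.IH(1) Node.prems(2) True left by (simp add: leaves_eq_Suc_internal)
    next
      case False
      then show ?thesis
        using Node.prems(2) internal Leaf name_from_last[of l 1] by simp
    qed
  qed
qed

fun graft_rightmost :: "tree \<Rightarrow> tree" where
  "graft_rightmost Leaf = Node Leaf Leaf"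
| "graft_rightmost (Node l r) = Node l (graft_rightmost r)"

lemma leaves_graft_rightmost [simp]: "leaves (graft_rightmost t) = Suc (leaves t)"
  by (induction t) auto

lemma internal_graft_rightmost [simp]: "internal (graft_rightmost t) = Suc (internal t)"
  by (induction t) auto

lemma name_from_graft_rightmost:
  assumes "i < k + leaves t - 1"
  shows "name_from (graft_rightmost t) k i = name_from t k i"
  using assms by (induction t arbitrary: k) (auto simp: leaves_eq_Suc_internal)

lemma name_from_graft_rightmost_last:
  "name_from (graft_rightmost t) k (k + leaves t - 1) = k + leaves t - 1"
proof (induction t arbitrary: k)
  case Leaf
  then show ?case by simp
next
  case (Node l r)
  then show ?case
    using Node.IH(2)[of "k + leaves l"] by (auto simp: leaves_eq_Suc_internal add.assoc)
qed

text \<open>Component \<open>i\<close> of a name is fixed once \<open>x\<^sub>i\<close> stops being the last variable: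
  it is \<open>1\<close> if the whole tree is grafted onto a new last leaf, and \<open>i\<close> if
  \<open>x\<^sub>i\<close> is split into a cherry.\<close>
fun tree_of_set :: "nat \<Rightarrow> nat set \<Rightarrow> tree" where
  "tree_of_set 0 T = Leaf"
| "tree_of_set (Suc n) T =
     (if Suc n \<in> T then graft_rightmost (tree_of_set n T) else Node (tree_of_set n T) Leaf)"

lemma internal_tree_of_set [simp]: "internal (tree_of_set n T) = n"
  by (induction n) auto

lemma name_from_tree_of_set:
  assumes "1 \<notin> T" and "i \<in> {1..n}"
  shows "name_from (tree_of_set n T) 1 i = (if i \<in> T then i else 1)"
  using assms(2)
proof (induction n arbitrary: i)
  case 0
  then show ?case by simp
next
  case (Suc n)
  have leaves: "leaves (tree_of_set n T) = Suc n"
    by (simp add: leaves_eq_Suc_internal)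
  show ?case
  proof (cases "i \<le> n")
    case True
    then have "name_from (tree_of_set (Suc n) T) 1 i = name_from (tree_of_set n T) 1 i"
      using Suc.prems name_from_graft_rightmost[of i 1 "tree_of_set n T"] leaves by auto
    then show ?thesis using Suc True by simp
  next
    case False
    then have "i = Suc n" using Suc.prems by simp
    then show ?thesis
      using assms(1) leaves name_from_graft_rightmost_last[of "tree_of_set n T" 1]
        name_from_last[of "tree_of_set n T" 1] by auto
  qed
qed

section \<open>The poset of names\<close>

definition set_name :: "nat \<Rightarrow> nat set \<Rightarrow> nat list" where
  "set_name n T = map (\<lambda>j. if Suc j \<in> T then Suc j else 1) [0..<n]"

definition fixed_points :: "nat \<Rightarrow> nat list \<Rightarrow> nat set" where
  "fixed_points n v = {i\<in>{2..n}. v ! (i - 1) = i}"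

lemma ball_atLeastAtMost_1_conv: "(\<forall>i\<in>{1..n}. P i) \<longleftrightarrow> (\<forall>j<n. P (Suc j))"
  unfolding image_Suc_lessThan[symmetric] by auto

lemma mem_names_iff:
  "v \<in> names n \<longleftrightarrow>
     (\<exists>t. internal t = n \<and> length v = n \<and> (\<forall>j<n. v ! j = name_from t 1 (Suc j)))"
  (is "_ \<longleftrightarrow> ?rhs")
proof -
  have "v \<in> names n \<longleftrightarrow> (\<exists>t. internal t = n \<and> v = tree_name t)"
    unfolding names_def by blast
  also have "\<dots> \<longleftrightarrow> ?rhs"
    unfolding tree_name_eq list_eq_iff_nth_eq by auto
  finally show ?thesis .
qed

lemma length_names: "v \<in> names n \<Longrightarrow> length v = n"
  by (auto simp: mem_names_iff)

lemma names_nth_bounds: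
  assumes "v \<in> names n" and "j < n"
  shows "1 \<le> v ! j \<and> v ! j \<le> Suc j"
proof -
  obtain t where "internal t = n" and "v ! j = name_from t 1 (Suc j)"
    using assms by (auto simp: mem_names_iff)
  then show ?thesis
    using assms(2) name_from_bounds[of 1 "Suc j" t] by (simp add: leaves_eq_Suc_internal)
qed

lemma names_no_fixed_points:
  assumes "v \<in> names n" and "fixed_points n v = {}"
  shows "v = replicate n 1"
proof -
  obtain t where t: "internal t = n" and "length v = n"
    and v: "\<forall>j<n. v ! j = name_from t 1 (Suc j)"
    using assms(1) by (auto simp: mem_names_iff)
  have "\<forall>i\<in>{2..internal t}. name_from t 1 i \<noteq> i"
    using assms(2) t v by (auto simp: fixed_points_def)
  then have "\<forall>j<n. v ! j = 1"
    using name_from_no_fixed_point t v by auto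
  then show ?thesis
    using \<open>length v = n\<close> by (simp add: list_eq_iff_nth_eq)
qed

lemma length_set_name [simp]: "length (set_name n T) = n"
  by (simp add: set_name_def)

lemma nth_set_name [simp]: "j < n \<Longrightarrow> set_name n T ! j = (if Suc j \<in> T then Suc j else 1)"
  by (simp add: set_name_def)

lemma set_name_in_names:
  assumes "T \<subseteq> {2..n}"
  shows "set_name n T \<in> names n"
  unfolding mem_names_iff
proof (intro exI conjI allI impI)
  fix j assume "j < n"
  moreover have "1 \<notin> T" using assms by auto
  ultimately show "set_name n T ! j = name_from (tree_of_set n T) 1 (Suc j)"
    using name_from_tree_of_set[of T "Suc j" n] by simp
qed simp_all

lemma finite_names: "finite (names n)"
proof (rule finite_subset)
  have "x \<le> n" if v: "v \<in> names n" and "x \<in> set v" for v x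
  proof -
    have "length v = n" using v by (rule length_names)
    with \<open>x \<in> set v\<close> obtain j where "j < n" and "x = v ! j"
      by (auto simp: in_set_conv_nth)
    then show ?thesis using names_nth_bounds[OF v] by fastforce
  qed
  then show "names n \<subseteq> {v. set v \<subseteq> {0..n} \<and> length v = n}"
    using length_names by auto
  show "finite {v. set v \<subseteq> {0..n} \<and> length v = n}"
    by (rule finite_lists_length_eq) simp
qed

lemma fixed_points_subset: "fixed_points n v \<subseteq> {2..n}"
  by (auto simp: fixed_points_def)

lemma zero_notin_fixed_points [simp]: "0 \<notin> fixed_points n v"
  by (simp add: fixed_points_def)

lemma Suc_mem_fixed_points_iff [simp]:
  "Suc j \<in> fixed_points n v \<longleftrightarrow> 0 < j \<and> j < n \<and> v ! j = Suc j"
  by (auto simp: fixed_points_def)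

lemma set_name_empty: "set_name n {} = replicate n 1"
  by (simp add: list_eq_iff_nth_eq)

lemma fixed_points_set_name:
  assumes "T \<subseteq> {2..n}"
  shows "fixed_points n (set_name n T) = T"
proof (rule set_eqI)
  fix i
  show "i \<in> fixed_points n (set_name n T) \<longleftrightarrow> i \<in> T"
    using assms by (cases i) (auto split: if_splits)
qed

lemma inj_on_set_name: "inj_on (set_name n) (Pow {2..n})"
  by (rule inj_on_inverseI[of _ "fixed_points n"]) (simp add: fixed_points_set_name)

lemma set_name_fixed_points:
  assumes "length v = n" and "\<forall>i\<in>{1..n}. v ! (i - 1) \<in> {1, i}"
  shows "set_name n (fixed_points n v) = v"
proof -
  have entries: "v ! j \<in> {1, Suc j}" if "j < n" for j
    using assms(2)[unfolded ball_atLeastAtMost_1_conv] that by simp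
  show ?thesis
  proof (rule nth_equalityI)
    fix j assume "j < length (set_name n (fixed_points n v))"
    then have "j < n" by simp
    then show "set_name n (fixed_points n v) ! j = v ! j"
      using entries[OF \<open>j < n\<close>] by auto
  qed (simp add: assms(1))
qed

lemma set_name_le_iff:
  assumes y: "y \<in> names n" and "T \<subseteq> {2..n}"
  shows "comp_le (set_name n T) y \<longleftrightarrow> T \<subseteq> fixed_points n y"
proof -
  have "(if Suc j \<in> T then Suc j else 1) \<le> y ! j \<longleftrightarrow> (Suc j \<in> T \<longrightarrow> y ! j = Suc j)"
    if "j < n" for j
    using names_nth_bounds[OF y that] by auto
  then have "comp_le (set_name n T) y \<longleftrightarrow> (\<forall>j<n. Suc j \<in> T \<longrightarrow> y ! j = Suc j)"
    using length_names[OF y] by (simp add: comp_le_def list_all2_conv_all_nth)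
  also have "\<dots> \<longleftrightarrow> T \<subseteq> fixed_points n y"
  proof
    assume fixed: "\<forall>j<n. Suc j \<in> T \<longrightarrow> y ! j = Suc j"
    show "T \<subseteq> fixed_points n y"
    proof
      fix i assume "i \<in> T"
      with assms(2) fixed show "i \<in> fixed_points n y" by (cases i) auto
    qed
  qed auto
  finally show ?thesis .
qed

lemma names_bottom: "y \<in> names n \<Longrightarrow> comp_le (replicate n 1) y"
  using set_name_le_iff[of y n "{}"] by (simp add: set_name_empty)

lemma comp_le_refl: "comp_le v v"
  by (simp add: comp_le_def list_all2_refl)

lemma comp_le_antisym: "comp_le v w \<Longrightarrow> comp_le w v \<Longrightarrow> v = w"
  unfolding comp_le_def by (rule list_all2_antisym) auto

lemma comp_le_trans: "comp_le u v \<Longrightarrow> comp_le v w \<Longrightarrow> comp_le u w"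
  unfolding comp_le_def by (rule list_all2_trans) auto

section \<open>The Moebius function\<close>

definition mobius_recursion :: "'a set \<Rightarrow> ('a \<Rightarrow> 'a \<Rightarrow> bool) \<Rightarrow> 'a \<Rightarrow> ('a \<Rightarrow> int) \<Rightarrow> bool" where
  "mobius_recursion S le x f \<longleftrightarrow> (\<forall>y. f y =
      (if y \<in> S \<and> x \<in> S \<and> le x y then
         (if y = x then 1 else - (\<Sum>z\<in>{z\<in>S. le x z \<and> le z y \<and> z \<noteq> y}. f z))
       else 0))"

lemma mobius_eq_The: "mobius S le x = (THE f. mobius_recursion S le x f)"
  unfolding mobius_def mobius_recursion_def ..

context
  fixes S :: "'a set" and le :: "'a \<Rightarrow> 'a \<Rightarrow> bool"
  assumes finite: "finite S"
    and refl_le: "\<And>y. y \<in> S \<Longrightarrow> le y y"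
    and antisym_le: "\<And>y z. y \<in> S \<Longrightarrow> z \<in> S \<Longrightarrow> le y z \<Longrightarrow> le z y \<Longrightarrow> y = z"
    and trans_le: "\<And>u v w. u \<in> S \<Longrightarrow> v \<in> S \<Longrightarrow> w \<in> S \<Longrightarrow> le u v \<Longrightarrow> le v w \<Longrightarrow> le u w"
begin

lemma mobius_recursion_unique:
  assumes f: "mobius_recursion S le x f" and g: "mobius_recursion S le x g"
  shows "f y = g y"
proof (induction "card {z\<in>S. le z y}" arbitrary: y rule: less_induct)
  case less
  note f_y = f[unfolded mobius_recursion_def, rule_format, of y]
  note g_y = g[unfolded mobius_recursion_def, rule_format, of y]
  show ?case
  proof (cases "y \<in> S \<and> x \<in> S \<and> le x y \<and> y \<noteq> x")
    case True
    have "f z = g z" if z: "z \<in> {z\<in>S. le x z \<and> le z y \<and> z \<noteq> y}" for z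
    proof (rule less)
      have "{w\<in>S. le w z} \<subset> {w\<in>S. le w y}"
        using z True refl_le antisym_le trans_le by blast
      then show "card {w\<in>S. le w z} < card {w\<in>S. le w y}"
        using finite by (simp add: psubset_card_mono)
    qed
    then have "(\<Sum>z\<in>{z\<in>S. le x z \<and> le z y \<and> z \<noteq> y}. f z) =
        (\<Sum>z\<in>{z\<in>S. le x z \<and> le z y \<and> z \<noteq> y}. g z)"
      by (rule sum.cong[OF refl])
    then show ?thesis using f_y g_y True by simp
  next
    case False
    then show ?thesis using f_y g_y by auto
  qed
qed

lemma mobius_eqI:
  assumes "x \<in> S" and "f x = 1"
    and "\<And>y. y \<notin> S \<or> \<not> le x y \<Longrightarrow> f y = 0"
    and interval: "\<And>y. y \<in> S \<Longrightarrow> le x y \<Longrightarrow> y \<noteq> x \<Longrightarrow> (\<Sum>z\<in>{z\<in>S. le x z \<and> le z y}. f z) = 0"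
  shows "mobius S le x = f"
proof -
  have "mobius_recursion S le x f"
    unfolding mobius_recursion_def
  proof
    fix y
    show "f y = (if y \<in> S \<and> x \<in> S \<and> le x y then
        (if y = x then 1 else - (\<Sum>z\<in>{z\<in>S. le x z \<and> le z y \<and> z \<noteq> y}. f z)) else 0)"
    proof (cases "y \<in> S \<and> le x y \<and> y \<noteq> x")
      case True
      then have "{z\<in>S. le x z \<and> le z y} = insert y {z\<in>S. le x z \<and> le z y \<and> z \<noteq> y}"
        using refl_le by auto
      then have "f y + (\<Sum>z\<in>{z\<in>S. le x z \<and> le z y \<and> z \<noteq> y}. f z) = 0"
        using interval[of y] True finite by simp
      then show ?thesis using True \<open>x \<in> S\<close> by simp
    next
      case False
      then show ?thesis using assms by auto
    qed
  qed
  moreover have "g = f" if "mobius_recursion S le x g" for g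
    by (rule ext) (rule mobius_recursion_unique[OF that \<open>mobius_recursion S le x f\<close>])
  ultimately show ?thesis
    unfolding mobius_eq_The by (rule the_equality[of "mobius_recursion S le x"])
qed

end

lemma sum_Pow_minus_one_power_card:
  assumes "finite D" and "D \<noteq> {}"
  shows "(\<Sum>T\<in>Pow D. (-1) ^ card T) = (0 :: 'a :: comm_ring_1)"
  using prod_diff_conv_sum[OF assms(1), of "\<lambda>_. 1" "\<lambda>_. 1"] assms
  by (simp add: power_0_left card_eq_0_iff)

definition tamari_mobius :: "nat \<Rightarrow> nat list \<Rightarrow> int" where
  "tamari_mobius n v =
     (if v \<in> names n \<and> (\<forall>i\<in>{1..n}. v ! (i - 1) \<in> {1, i})
      then (-1) ^ card (fixed_points n v) else 0)"

lemma tamari_mobius_set_name: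
  assumes "T \<subseteq> {2..n}"
  shows "tamari_mobius n (set_name n T) = (-1) ^ card T"
  using assms set_name_in_names[OF assms]
  by (auto simp: tamari_mobius_def fixed_points_set_name ball_atLeastAtMost_1_conv)

lemma sum_tamari_mobius_interval:
  assumes y: "y \<in> names n" and "y \<noteq> replicate n 1"
  shows "(\<Sum>z\<in>{z\<in>names n. comp_le (replicate n 1) z \<and> comp_le z y}. tamari_mobius n z) = 0"
proof -
  let ?I = "{z\<in>names n. comp_le (replicate n 1) z \<and> comp_le z y}"
  define D where "D = fixed_points n y"
  have D: "D \<subseteq> {2..n}" "finite D" "D \<noteq> {}"
    using names_no_fixed_points[OF y] assms(2) fixed_points_subset[of n y]
    by (auto simp: D_def intro: finite_subset)
  have "set_name n ` Pow D \<subseteq> ?I"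
    using D(1) set_name_in_names set_name_le_iff[OF y] names_bottom by (auto simp: D_def)
  moreover have "tamari_mobius n z = 0" if "z \<in> ?I - set_name n ` Pow D" for z
  proof (rule ccontr)
    assume "tamari_mobius n z \<noteq> 0"
    then have "z \<in> names n" and "\<forall>i\<in>{1..n}. z ! (i - 1) \<in> {1, i}"
      by (auto simp: tamari_mobius_def split: if_splits)
    then have z: "set_name n (fixed_points n z) = z"
      by (simp add: set_name_fixed_points length_names)
    have "comp_le (set_name n (fixed_points n z)) y"
      unfolding z using that by simp
    then have "fixed_points n z \<subseteq> D"
      using set_name_le_iff[OF y fixed_points_subset] by (simp add: D_def)
    then have "z \<in> set_name n ` Pow D" using z by (metis Pow_iff image_eqI)
    with that show False by simp
  qed
  ultimately have "(\<Sum>z\<in>?I. tamari_mobius n z) = (\<Sum>z\<in>set_name n ` Pow D. tamari_mobius n z)"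
    using finite_names by (intro sum.mono_neutral_right) auto
  also have "\<dots> = (\<Sum>T\<in>Pow D. tamari_mobius n (set_name n T))"
  proof -
    have "inj_on (set_name n) (Pow D)"
      using D(1) by (intro inj_on_subset[OF inj_on_set_name]) auto
    then show ?thesis by (simp add: sum.reindex)
  qed
  also have "\<dots> = (\<Sum>T\<in>Pow D. (-1) ^ card T)"
    using D(1) by (intro sum.cong refl tamari_mobius_set_name) auto
  also have "\<dots> = 0"
    using D(2,3) by (rule sum_Pow_minus_one_power_card)
  finally show ?thesis .
qed

theorem mainTheorem3:
  fixes n :: nat and v :: "nat list"
  assumes "n \<ge> 1" and "v \<in> names n"
  shows "mobius (names n) comp_le (replicate n 1) v =
    (if \<forall>i\<in>{1..n}. v ! (i - 1) \<in> {1, i}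
     then (-1) ^ card {i\<in>{2..n}. v ! (i - 1) = i}
     else 0)"
proof -
  have "mobius (names n) comp_le (replicate n 1) = tamari_mobius n"
  proof (rule mobius_eqI)
    show "replicate n 1 \<in> names n" and "tamari_mobius n (replicate n 1) = 1"
      using set_name_in_names[of "{}" n] tamari_mobius_set_name[of "{}" n]
      by (simp_all add: set_name_empty)
    show "tamari_mobius n y = 0" if "y \<notin> names n \<or> \<not> comp_le (replicate n 1) y" for y
      using that names_bottom by (auto simp: tamari_mobius_def)
  qed (use finite_names comp_le_refl comp_le_antisym comp_le_trans sum_tamari_mobius_interval in auto)
  then show ?thesis
    using assms(2) by (simp add: tamari_mobius_def fixed_points_def)
qed

end
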